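(* Let $\kappa\in\mathbb{C}$, let $M\ge1$ be an integer and let $\phi_1,\dots,\phi_M$ be parameters. For each $k$ put $$\Delta^*_k=e^{-i\phi_k}\Bigl(\sqrt{\cos^2\phi_k+\kappa}+\cos\phi_k\Bigr),\qquad \Delta_k=e^{i\phi_k}\Bigl(\sqrt{\cos^2\phi_k+\kappa}+\cos\phi_k\Bigr),$$ (so that $\kappa=\Delta^*_k\Delta_k-\Delta^*_k-\Delta_k$). For $m\in\mathbb{Z}$, $x_1\in\mathbb{C}$ and amplitudes $f_1,\dots,f_M$ define $$X_m(x_1;\phi_k,f_k)=f_k\,e^{(\Delta^*_k-\Delta_k)x_1}\Bigl(\frac{\Delta_k}{\Delta^*_k}\Bigr)^{m+1}$$ and $$\boldsymbol{\tau}_m\bigl(x_1;\{\phi_k,f_k\}_{k=1}^M\bigr)=\prod_{i<j}(\Delta^*_i-\Delta^*_j)^{-1}\det\Bigl|(1-\Delta^*_j)^{i-1}-X_m(x_1;\phi_j,f_j)\,(1-\Delta_j)^{i-1}\frac{\Delta^*_j}{\Delta_j}\Bigr|_{i,j=1}^M .$$ Then for every choice of $\phi_1,\dots,\phi_M$ for which this expression is defined, $\boldsymbol{\tau}_m\bigl(0;\{\phi_k,1\}_{k=1}^M\bigr)=0$ for all $m\in\{-M+1,-M+2,\dots,0\}$.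
   Context: A fixed branch of the square root is used in the definition of $\Delta^*_k,\Delta_k$. "Defined" means that the $\Delta^*_k$ are pairwise distinct and $\Delta_k,\Delta^*_k\neq0$. The function $\boldsymbol{\tau}_m$ is the (normalized, rational) $M$-soliton tau-function of the relativistic Toda chain evaluated at continuous time $x_1$, with all soliton amplitudes $f_k$ set to $1$ in the claim. *)

theory Defs
  imports Complex_Main "Jordan_Normal_Form.Determinant"
begin

definition Dstar :: "complex \<Rightarrow> complex \<Rightarrow> complex" where
  "Dstar \<kappa> \<phi> = exp (- \<i> * \<phi>) * (csqrt ((cos \<phi>)^2 + \<kappa>) + cos \<phi>)"

definition Dlt :: "complex \<Rightarrow> complex \<Rightarrow> complex" where
  "Dlt \<kappa> \<phi> = exp (\<i> * \<phi>) * (csqrt ((cos \<phi>)^2 + \<kappa>) + cos \<phi>)"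

definition Xm :: "complex \<Rightarrow> int \<Rightarrow> complex \<Rightarrow> complex \<Rightarrow> complex \<Rightarrow> complex" where
  "Xm \<kappa> m x1 \<phi> f = f * exp ((Dstar \<kappa> \<phi> - Dlt \<kappa> \<phi>) * x1)
      * (Dlt \<kappa> \<phi> / Dstar \<kappa> \<phi>) powi (m + 1)"

text \<open>The tau function; phi and f are indexed by 1..M. Matrix entries use 0-based
  indices i, j, corresponding to the paper's i+1, j+1.\<close>
definition tau :: "complex \<Rightarrow> nat \<Rightarrow> (nat \<Rightarrow> complex) \<Rightarrow> (nat \<Rightarrow> complex) \<Rightarrow> int \<Rightarrow> complex \<Rightarrow> complex" where
  "tau \<kappa> M \<phi> f m x1 =
     (\<Prod>(i, j) \<in> {(i, j). 1 \<le> i \<and> i < j \<and> j \<le> M}.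
         inverse (Dstar \<kappa> (\<phi> i) - Dstar \<kappa> (\<phi> j)))
     * det (mat M M (\<lambda>(i, j).
          (1 - Dstar \<kappa> (\<phi> (j+1))) ^ i
          - Xm \<kappa> m x1 (\<phi> (j+1)) (f (j+1)) * (1 - Dlt \<kappa> (\<phi> (j+1))) ^ i
            * (Dstar \<kappa> (\<phi> (j+1)) / Dlt \<kappa> (\<phi> (j+1)))))"

end

theory Submission
  imports Defs
begin

text \<open>For \<open>m = -n\<close> with \<open>0 \<le> n < M\<close> and \<open>x\<^sub>1 = 0\<close>, \<open>f\<^sub>k = 1\<close>, the \<open>j\<close>-th column of the
  matrix is \<open>(1 - a)\<^sup>i - (a/b)\<^sup>n (1 - b)\<^sup>i\<close> with \<open>a = \<Delta>\<^sup>*\<^sub>j\<close>, \<open>b = \<Delta>\<^sub>j\<close>. Combining the rows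
  \<open>i = 0, \<dots>, n\<close> with the alternating binomial coefficients \<open>(-1)\<^sup>i C(n,i)\<close> turns the
  powers \<open>(1 - x)\<^sup>i\<close> into \<open>x\<^sup>n\<close>, so every column yields \<open>a\<^sup>n - (a/b)\<^sup>n b\<^sup>n = 0\<close>. The rows are
  therefore linearly dependent and the determinant vanishes, whatever the (possibly junk)
  prefactor is; this is why distinctness of the \<open>\<Delta>\<^sup>*\<^sub>k\<close> is never used.\<close>

lemma alternating_binomial_sum_power:
  "(\<Sum>i\<le>n. of_nat (n choose i) * (-1)^i * (1 - x)^i) = (x :: 'a :: comm_ring_1)^n"
proof -
  have "x^n = ((x - 1) + 1)^n" by simp
  also have "\<dots> = (\<Sum>i\<le>n. of_nat (n choose i) * (x - 1)^i)"
    by (subst binomial_ring) simp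
  also have "\<dots> = (\<Sum>i\<le>n. of_nat (n choose i) * (-1)^i * (1 - x)^i)"
    by (intro sum.cong refl) (metis minus_diff_eq power_minus mult.assoc)
  finally show ?thesis by (rule sym)
qed

lemma alternating_binomial_combination_eq_zero:
  fixes a b :: "'a :: field"
  assumes "b \<noteq> 0"
  shows "(\<Sum>i\<le>n. of_nat (n choose i) * (-1)^i * ((1 - a)^i - (a / b)^n * (1 - b)^i)) = 0"
proof -
  have "(\<Sum>i\<le>n. of_nat (n choose i) * (-1)^i * ((1 - a)^i - (a / b)^n * (1 - b)^i))
      = (\<Sum>i\<le>n. of_nat (n choose i) * (-1)^i * (1 - a)^i)
        - (a / b)^n * (\<Sum>i\<le>n. of_nat (n choose i) * (-1)^i * (1 - b)^i)"
    by (simp add: sum_subtractf sum_distrib_left algebra_simps)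
  also have "\<dots> = a^n - (a / b)^n * b^n"
    by (simp only: alternating_binomial_sum_power)
  also have "\<dots> = 0"
    using assms by (simp add: power_divide)
  finally show ?thesis .
qed

lemma det_eq_zero_if_rows_dependent:
  fixes A :: "'a :: idom mat"
  assumes A: "A \<in> carrier_mat n n"
    and nontrivial: "k < n" "c k \<noteq> 0"
    and combination: "\<And>j. j < n \<Longrightarrow> (\<Sum>i<n. c i * A $$ (i, j)) = 0"
  shows "det A = 0"
proof -
  define v where "v = vec n c"
  have v: "v \<in> carrier_vec n" by (simp add: v_def)
  have "v \<noteq> 0\<^sub>v n"
    using nontrivial by (metis index_vec index_zero_vec(1) v_def)
  moreover have "transpose_mat A *\<^sub>v v = 0\<^sub>v n"
  proof (rule eq_vecI)
    fix j assume "j < dim_vec (0\<^sub>v n :: 'a vec)"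
    then have j: "j < n" by simp
    have "(transpose_mat A *\<^sub>v v) $ j = (\<Sum>i<n. A $$ (i, j) * c i)"
      using A j by (simp add: v_def scalar_prod_def lessThan_atLeast0)
    also have "\<dots> = 0"
      using combination[OF j] by (simp add: mult.commute)
    finally show "(transpose_mat A *\<^sub>v v) $ j = 0\<^sub>v n $ j" using j by simp
  qed (use A in simp)
  ultimately have "det (transpose_mat A) = 0"
    using det_0_iff_vec_prod_zero[of "transpose_mat A" n] A v by auto
  then show ?thesis using det_transpose[OF A] by simp
qed

lemma Xm_zero_mult_ratio:
  assumes "Dstar \<kappa> \<phi> \<noteq> 0" and "Dlt \<kappa> \<phi> \<noteq> 0"
  shows "Xm \<kappa> (- int n) 0 \<phi> 1 * (Dstar \<kappa> \<phi> / Dlt \<kappa> \<phi>) = (Dstar \<kappa> \<phi> / Dlt \<kappa> \<phi>)^n"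
proof -
  define a b where "a = Dstar \<kappa> \<phi>" and "b = Dlt \<kappa> \<phi>"
  have "a \<noteq> 0" "b \<noteq> 0" using assms by (simp_all add: a_def b_def)
  have "Xm \<kappa> (- int n) 0 \<phi> 1 = (b / a) powi (- int n + 1)"
    by (simp add: Xm_def a_def b_def)
  also have "\<dots> = (b / a) powi (- int n) * (b / a)"
    using \<open>a \<noteq> 0\<close> \<open>b \<noteq> 0\<close> power_int_add[of "b / a" "- int n" 1] by simp
  also have "\<dots> = (a / b)^n * (b / a)"
    by (simp add: power_int_minus power_inverse[symmetric] inverse_divide)
  finally show ?thesis
    using \<open>a \<noteq> 0\<close> \<open>b \<noteq> 0\<close> by (simp add: a_def[symmetric] b_def[symmetric])
qed

lemma det_binomial_columns_eq_zero:
  fixes a b :: "nat \<Rightarrow> 'a :: field"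
  assumes "n < M" and "\<And>j. j < M \<Longrightarrow> b j \<noteq> 0"
  shows "det (mat M M (\<lambda>(i, j). (1 - a j)^i - (a j / b j)^n * (1 - b j)^i)) = 0"
    (is "det ?A = 0")
proof (rule det_eq_zero_if_rows_dependent)
  define c :: "nat \<Rightarrow> 'a" where "c i = (if i \<le> n then of_nat (n choose i) * (-1)^i else 0)" for i
  show "?A \<in> carrier_mat M M" "0 < M" "c 0 \<noteq> 0"
    using assms(1) by (auto simp: c_def)
  fix j assume "j < M"
  have "(\<Sum>i<M. c i * ?A $$ (i, j)) = (\<Sum>i\<le>n. c i * ?A $$ (i, j))"
    using \<open>n < M\<close> by (intro sum.mono_neutral_right) (auto simp: c_def)
  also have "\<dots> = (\<Sum>i\<le>n. of_nat (n choose i) * (-1)^i * ((1 - a j)^i - (a j / b j)^n * (1 - b j)^i))"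
    using \<open>n < M\<close> \<open>j < M\<close> by (intro sum.cong) (auto simp: c_def)
  also have "\<dots> = 0"
    using assms(2)[OF \<open>j < M\<close>] by (rule alternating_binomial_combination_eq_zero)
  finally show "(\<Sum>i<M. c i * ?A $$ (i, j)) = 0" .
qed

theorem proposition3p3:
  fixes \<kappa> :: complex and M :: nat and \<phi> :: "nat \<Rightarrow> complex" and m :: int
  assumes "M \<ge> 1"
    and "inj_on (\<lambda>k. Dstar \<kappa> (\<phi> k)) {1..M}"
    and "\<forall>k \<in> {1..M}. Dstar \<kappa> (\<phi> k) \<noteq> 0 \<and> Dlt \<kappa> (\<phi> k) \<noteq> 0"
    and "- int M + 1 \<le> m" and "m \<le> 0"
  shows "tau \<kappa> M \<phi> (\<lambda>_. 1) m 0 = 0"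
proof -
  define n where "n = nat (- m)"
  have m: "m = - int n" and "n < M" using assms(4,5) by (auto simp: n_def)
  define a b where "a j = Dstar \<kappa> (\<phi> (j+1))" and "b j = Dlt \<kappa> (\<phi> (j+1))" for j
  have b_nonzero: "b j \<noteq> 0" if "j < M" for j
    using assms(3) that by (simp add: b_def)
  have column: "Xm \<kappa> m 0 (\<phi> (j+1)) 1 * z * a j / b j = (a j / b j)^n * z" if "j < M" for j z
  proof -
    have "Xm \<kappa> m 0 (\<phi> (j+1)) 1 * (a j / b j) = (a j / b j)^n"
      using Xm_zero_mult_ratio assms(3) that by (simp add: a_def b_def m)
    then show ?thesis by (simp add: divide_inverse mult_ac)
  qed
  have "tau \<kappa> M \<phi> (\<lambda>_. 1) m 0 = (\<Prod>(i, j) \<in> {(i, j). 1 \<le> i \<and> i < j \<and> j \<le> M}.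
      inverse (Dstar \<kappa> (\<phi> i) - Dstar \<kappa> (\<phi> j)))
      * det (mat M M (\<lambda>(i, j). (1 - a j)^i - (a j / b j)^n * (1 - b j)^i))"
    unfolding tau_def
    by (intro arg_cong2[where f = "(*)"] arg_cong[where f = det] refl eq_matI)
      (auto simp: a_def b_def column[unfolded a_def b_def, simplified])
  also have "\<dots> = 0"
    using det_binomial_columns_eq_zero[OF \<open>n < M\<close> b_nonzero] by simp
  finally show ?thesis .
qed

end
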